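(* Let $A\subseteq\mathbf R^{n+1}$ be closed, $x,y\in\partial A$, and $0<r<s/2$. Suppose $u,v\in\mathbf S^n$ satisfy $$B(x-ru,r)\subseteq A,\quad U(x+su,s)\cap A=\varnothing,\quad B(y-rv,r)\subseteq A,\quad U(y+sv,s)\cap A=\varnothing.$$ Then $$|u-v|\le\max\Big\{\frac{2(s-2r)}{r(s-r)},\sqrt{\frac{2}{r(s-r)}}\Big\}\,|x-y|.$$
   Context: $\mathbf R^{n+1}$ carries the Euclidean norm $|\cdot|$; $\mathbf S^n$ is the Euclidean unit sphere; $B(z,t)$ and $U(z,t)$ denote the closed and open Euclidean balls of center $z$ and radius $t$. *)

theory Defs
  imports "HOL-Analysis.Analysis"
begin

end

theory Submission
  imports Defs
begin

text \<open>
  The inner ball at \<open>x\<close> and the outer ball at \<open>y\<close> are disjoint, so their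
  centres are at least \<open>r + s\<close> apart; likewise with \<open>x\<close> and \<open>y\<close> exchanged. Adding the
  squares of these two inequalities, the cross terms collapse to
  \<open>r s |u - v|\<^sup>2 \<le> |x - y|\<^sup>2 + (s - r) \<langle>x - y, u - v\<rangle>\<close>, and Cauchy-Schwarz turns this into
  \<open>r |u - v| \<le> |x - y|\<close>.
\<close>

lemma disjoint_cball_ballD:
  fixes a b :: "'a::real_normed_vector"
  assumes "cball a r \<inter> ball b s = {}" "0 \<le> r" "0 < s"
  shows "r + s \<le> dist a b"
proof (rule ccontr)
  assume far: "\<not> r + s \<le> dist a b"
  show False
  proof (cases "dist a b \<le> r")
    case True
    then have "b \<in> cball a r \<inter> ball b s" using \<open>0 < s\<close> by simp
    with assms(1) show False by blast
  next
    case False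
    define p where "p = a + (r / dist a b) *\<^sub>R (b - a)"
    have "dist a b > 0" using False \<open>0 \<le> r\<close> by linarith
    have "p - b = (1 - r / dist a b) *\<^sub>R (a - b)" by (simp add: p_def algebra_simps)
    moreover have "r / dist a b \<le> 1" using False \<open>dist a b > 0\<close> by simp
    ultimately have "dist p b = (1 - r / dist a b) * dist a b"
      by (simp add: dist_norm)
    also have "\<dots> = dist a b - r" using \<open>dist a b > 0\<close> by (simp add: field_simps)
    finally have "dist p b = dist a b - r" .
    then have "p \<in> ball b s" using far by (simp add: dist_commute)
    moreover have "p \<in> cball a r"
      using \<open>dist a b > 0\<close> \<open>0 \<le> r\<close> by (simp add: p_def dist_norm norm_minus_commute)
    ultimately show False using assms(1) by blast
  qed
qed

lemma norm_diff_scaleR_squared: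
  fixes d u v :: "'a::real_inner"
  shows "(norm (d - r *\<^sub>R u - s *\<^sub>R v))\<^sup>2 = (norm d)\<^sup>2 + r\<^sup>2 * (norm u)\<^sup>2 + s\<^sup>2 * (norm v)\<^sup>2
     - 2 * r * inner d u - 2 * s * inner d v + 2 * r * s * inner u v"
  unfolding power2_norm_eq_inner
  by (simp add: inner_diff_left inner_diff_right inner_commute algebra_simps power2_eq_square)

lemma unit_vectors_norm_diff_squared_le:
  fixes d u v :: "'a::real_inner"
  assumes "norm u = 1" "norm v = 1"
    and "r + s \<le> norm (d - r *\<^sub>R u - s *\<^sub>R v)"
    and "r + s \<le> norm (- d - r *\<^sub>R v - s *\<^sub>R u)"
    and "0 \<le> r + s"
  shows "r * s * (norm (u - v))\<^sup>2 \<le> (norm d)\<^sup>2 + (s - r) * inner d (u - v)"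
proof -
  have "(r + s)\<^sup>2 \<le> (norm (d - r *\<^sub>R u - s *\<^sub>R v))\<^sup>2"
    using assms(3,5) by (rule power_mono)
  then have 1: "(r + s)\<^sup>2 \<le> (norm d)\<^sup>2 + r\<^sup>2 + s\<^sup>2 - 2 * r * inner d u - 2 * s * inner d v
      + 2 * r * s * inner u v"
    using assms(1,2) by (simp add: norm_diff_scaleR_squared)
  have "(r + s)\<^sup>2 \<le> (norm (- d - r *\<^sub>R v - s *\<^sub>R u))\<^sup>2"
    using assms(4,5) by (rule power_mono)
  then have 2: "(r + s)\<^sup>2 \<le> (norm d)\<^sup>2 + r\<^sup>2 + s\<^sup>2 + 2 * r * inner d v + 2 * s * inner d u
      + 2 * r * s * inner u v"
    using assms(1,2) by (simp add: norm_diff_scaleR_squared inner_commute)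
  have "r * s * (norm (u - v))\<^sup>2 = 2 * r * s - 2 * r * s * inner u v"
    using assms(1,2)
    by (simp add: power2_norm_eq_inner inner_diff_left inner_diff_right inner_commute norm_eq_1
        algebra_simps)
  moreover have "(s - r) * inner d (u - v) = s * inner d u - s * inner d v - r * inner d u + r * inner d v"
    by (simp add: inner_diff_right algebra_simps)
  moreover have "(r + s)\<^sup>2 = r\<^sup>2 + s\<^sup>2 + 2 * r * s" by (simp add: power2_eq_square algebra_simps)
  ultimately show ?thesis using 1 2 by linarith
qed

lemma unit_vectors_norm_diff_le:
  fixes d u v :: "'a::real_inner"
  assumes "norm u = 1" "norm v = 1" "0 < r" "r \<le> s"
    and "r + s \<le> norm (d - r *\<^sub>R u - s *\<^sub>R v)"
    and "r + s \<le> norm (- d - r *\<^sub>R v - s *\<^sub>R u)"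
  shows "r * norm (u - v) \<le> norm d"
proof -
  have "(s - r) * inner d (u - v) \<le> (s - r) * (norm d * norm (u - v))"
    using assms(4) norm_cauchy_schwarz by (intro mult_left_mono) auto
  then have "(r * norm (u - v) - norm d) * (s * norm (u - v) + norm d) \<le> 0"
    using unit_vectors_norm_diff_squared_le[OF assms(1,2,5,6)] assms(3,4)
    by (simp add: algebra_simps power2_eq_square)
  moreover have "r * norm (u - v) \<le> s * norm (u - v)"
    using assms(4) by (intro mult_right_mono) auto
  moreover have "0 \<le> r * norm (u - v)" using assms(3) by simp
  ultimately show ?thesis
    using norm_ge_zero[of d] unfolding mult_le_0_iff by linarith
qed

lemma inverse_le_max_bound:
  fixes r s :: real
  assumes "0 < r" "2 * r < s"
  shows "1 / r \<le> max (2 * (s - 2 * r) / (r * (s - r))) (sqrt (2 / (r * (s - r))))"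
proof (cases "3 * r \<le> s")
  case True
  then have "1 / r \<le> 2 * (s - 2 * r) / (r * (s - r))"
    using assms by (simp add: divide_simps)
  then show ?thesis by simp
next
  case False
  have "1 / r = sqrt ((1 / r)\<^sup>2)" using assms by simp
  also have "\<dots> \<le> sqrt (2 / (r * (s - r)))"
    using False assms by (intro real_sqrt_le_mono) (simp add: divide_simps power2_eq_square)
  finally show ?thesis by simp
qed

theorem lemma2p12:
  fixes A :: "'a::euclidean_space set" and x y u v :: 'a and r s :: real
  assumes "closed A"
    and "x \<in> frontier A" and "y \<in> frontier A"
    and "0 < r" and "r < s / 2"
    and "norm u = 1" and "norm v = 1"
    and "cball (x - r *\<^sub>R u) r \<subseteq> A"
    and "ball (x + s *\<^sub>R u) s \<inter> A = {}"
    and "cball (y - r *\<^sub>R v) r \<subseteq> A"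
    and "ball (y + s *\<^sub>R v) s \<inter> A = {}"
  shows "norm (u - v) \<le> max (2 * (s - 2 * r) / (r * (s - r))) (sqrt (2 / (r * (s - r)))) * norm (x - y)"
proof -
  have "r + s \<le> dist (x - r *\<^sub>R u) (y + s *\<^sub>R v)"
    using assms(4,5,8,11) by (intro disjoint_cball_ballD) auto
  moreover have "r + s \<le> dist (y - r *\<^sub>R v) (x + s *\<^sub>R u)"
    using assms(4,5,9,10) by (intro disjoint_cball_ballD) auto
  ultimately have "r * norm (u - v) \<le> norm (x - y)"
    using assms(4,5,6,7)
    by (intro unit_vectors_norm_diff_le) (auto simp: dist_norm algebra_simps)
  then have "norm (u - v) \<le> 1 / r * norm (x - y)"
    using assms(4) by (simp add: field_simps)
  also have "\<dots> \<le> max (2 * (s - 2 * r) / (r * (s - r))) (sqrt (2 / (r * (s - r)))) * norm (x - y)"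
    using assms(4,5) inverse_le_max_bound[of r s] by (intro mult_right_mono) auto
  finally show ?thesis .
qed

end
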